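(* Let $q$ be even and $n\ge2$. The unipotent conjugacy classes of type $(2,1,\dots,1)$ in $\mathbf{SL}_n(q)$ are not of type D.
   Context: Unipotent type = sizes of Jordan blocks; type $(2,1,\dots,1)$ means one block of size 2 and $n-2$ blocks of size 1. Conjugacy classes are racks with $x\triangleright y=xyx^{-1}$. A subrack $Y$ is decomposable if $Y=R\sqcup S$ with nonempty subracks $R,S$, $Y\triangleright R=R$, $Y\triangleright S=S$. Type D: a decomposable subrack $R\sqcup S$ with $r\in R,s\in S$ and $r\triangleright(s\triangleright(r\triangleright s))\neq s$. *)

theory Defs
  imports "Jordan_Normal_Form.Jordan_Normal_Form"
begin

definition SL_mat :: "nat \<Rightarrow> 'a :: field mat set" where
  "SL_mat n = {A \<in> carrier_mat n n. det A = 1}"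

definition minv :: "nat \<Rightarrow> 'a :: field mat \<Rightarrow> 'a mat" where
  "minv n A = (THE B. B \<in> carrier_mat n n \<and> A * B = 1\<^sub>m n \<and> B * A = 1\<^sub>m n)"

definition mconj :: "nat \<Rightarrow> 'a :: field mat \<Rightarrow> 'a mat \<Rightarrow> 'a mat" where
  "mconj n x y = x * y * minv n x"

definition SL_class :: "nat \<Rightarrow> 'a :: field mat \<Rightarrow> 'a mat set" where
  "SL_class n x = {mconj n g x | g. g \<in> SL_mat n}"

definition is_subrack :: "'x set \<Rightarrow> ('x \<Rightarrow> 'x \<Rightarrow> 'x) \<Rightarrow> 'x set \<Rightarrow> bool" where
  "is_subrack X op Y \<longleftrightarrow> Y \<subseteq> X \<and> (\<forall>a\<in>Y. \<forall>b\<in>Y. op a b \<in> Y)"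

definition decomposition :: "'x set \<Rightarrow> ('x \<Rightarrow> 'x \<Rightarrow> 'x) \<Rightarrow> 'x set \<Rightarrow> 'x set \<Rightarrow> bool" where
  "decomposition X op R S \<longleftrightarrow>
     is_subrack X op (R \<union> S) \<and> R \<inter> S = {} \<and> R \<noteq> {} \<and> S \<noteq> {} \<and>
     is_subrack X op R \<and> is_subrack X op S \<and>
     (\<forall>y\<in>R \<union> S. op y ` R = R \<and> op y ` S = S)"

definition type_D :: "'x set \<Rightarrow> ('x \<Rightarrow> 'x \<Rightarrow> 'x) \<Rightarrow> bool" where
  "type_D X op \<longleftrightarrow> (\<exists>R S. decomposition X op R S \<and>
     (\<exists>r\<in>R. \<exists>s\<in>S. op r (op s (op r s)) \<noteq> s))"

end

theory Submission
  imports Defs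
begin

text \<open>In characteristic 2, which the even field order forces, every element y of the class is an
  involution y = 1 + N with N of rank one, so N M N is a scalar multiple of N for every matrix M.
  For two elements r = 1 + A and s = 1 + B this gives A B A = l A and B A B = l B with a common
  scalar l. If l = 0, then (r s)^4 = 1, which is exactly r |> (s |> (r |> s)) = s. If l is nonzero,
  then r s = 1 + E + y with E idempotent and y * y = E + l y; the algebra spanned by E and y has no
  nilpotents, so the finite order of r s cannot be even. Hence (r s)^(2j+1) = 1 for some j, and
  s = (r s)^(2j) r is reached from r by conjugating alternately with s and r, so r and s lie in the
  same part of every decomposition.\<close>

lemma even_card_if_fixpoint_free_involution:
  assumes "finite X" and "\<And>x. x \<in> X \<Longrightarrow> h x \<in> X \<and> h (h x) = x \<and> h x \<noteq> x"
  shows "even (card X)"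
  using assms
proof (induction "card X" arbitrary: X rule: less_induct)
  case less
  show ?case
  proof (cases "X = {}")
    case False
    then obtain x where x: "x \<in> X" by blast
    let ?Y = "X - {x, h x}"
    have pair: "{x, h x} \<subseteq> X" "card {x, h x} = 2" using less.prems(2)[OF x] x by auto
    have card_X: "card X = card ?Y + 2"
      using pair card_Diff_subset[of "{x, h x}" X] card_mono[OF less.prems(1) pair(1)] by simp
    have "even (card ?Y)"
    proof (rule less.hyps)
      show "card ?Y < card X" "finite ?Y" using card_X less.prems(1) by auto
      show "h z \<in> ?Y \<and> h (h z) = z \<and> h z \<noteq> z" if z: "z \<in> ?Y" for z
      proof -
        have hz: "h z \<in> X" "h (h z) = z" "h z \<noteq> z" using z less.prems(2)[of z] by auto
        have "h z \<noteq> x" "h z \<noteq> h x" using z hz(2) less.prems(2)[OF x] by auto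
        with hz show ?thesis by auto
      qed
    qed
    then show ?thesis using card_X by simp
  qed simp
qed

lemma one_plus_one_eq_zero_if_even_card:
  assumes "even (card (UNIV :: 'a::{field,finite} set))"
  shows "(1::'a) + 1 = 0"
proof (rule ccontr)
  assume two: "(1::'a) + 1 \<noteq> 0"
  define X where "X = (UNIV :: 'a set) - {0}"
  have "even (card X)"
  proof (rule even_card_if_fixpoint_free_involution[where h = uminus])
    fix x assume x: "x \<in> X"
    have "- x \<noteq> x"
    proof
      assume "- x = x"
      then have "(1 + 1) * x = 0" by (simp add: distrib_right)
      with two x show False unfolding X_def by simp
    qed
    with x show "- x \<in> X \<and> - (- x) = x \<and> - x \<noteq> x" unfolding X_def by simp
  qed (simp add: X_def)
  moreover have "card (UNIV :: 'a set) = Suc (card X)"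
    unfolding X_def by (rule card.remove) simp_all
  ultimately show False using assms by simp
qed

lemma minv_unique:
  fixes A B :: "'a::field mat"
  assumes A: "A \<in> carrier_mat n n" and B: "B \<in> carrier_mat n n"
    and AB: "A * B = 1\<^sub>m n" and BA: "B * A = 1\<^sub>m n"
  shows "minv n A = B"
  unfolding minv_def
proof (rule the_equality)
  show "B \<in> carrier_mat n n \<and> A * B = 1\<^sub>m n \<and> B * A = 1\<^sub>m n" using B AB BA by simp
next
  fix B' assume "B' \<in> carrier_mat n n \<and> A * B' = 1\<^sub>m n \<and> B' * A = 1\<^sub>m n"
  then have B': "B' \<in> carrier_mat n n" and B'A: "B' * A = 1\<^sub>m n" by auto
  have "B' = B' * (A * B)" using B' AB by (simp add: right_mult_one_mat[of B' n n])
  also have "\<dots> = (B' * A) * B" using A B B' by simp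
  also have "\<dots> = B" using B'A B by simp
  finally show "B' = B" .
qed

lemma SL_mat_invertible:
  fixes g :: "'a::field mat"
  assumes "g \<in> SL_mat n"
  shows "\<exists>h \<in> carrier_mat n n. g * h = 1\<^sub>m n \<and> h * g = 1\<^sub>m n"
proof -
  have "g \<in> carrier_mat n n" "det g = 1" using assms unfolding SL_mat_def by auto
  then have "g \<in> Units (ring_mat TYPE('a) n ())" by (intro det_non_zero_imp_unit) simp_all
  then show ?thesis unfolding Units_def ring_mat_def by auto
qed

lemma mconj_involution:
  fixes r :: "'a::field mat"
  assumes "r \<in> carrier_mat n n" and "r * r = 1\<^sub>m n"
  shows "mconj n r z = r * z * r"
  unfolding mconj_def using minv_unique[OF assms(1,1,2,2)] by simp

lemma smult_mat_cancel:
  fixes A :: "'a::field mat"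
  assumes A: "A \<in> carrier_mat n n" and eq: "c \<cdot>\<^sub>m A = d \<cdot>\<^sub>m A" and "A \<noteq> 0\<^sub>m n n"
  shows "c = d"
proof -
  have "\<exists>i<n. \<exists>j<n. A $$ (i, j) \<noteq> 0"
  proof (rule ccontr)
    assume "\<not> ?thesis"
    then have "A = 0\<^sub>m n n" using A by (auto intro!: eq_matI)
    with \<open>A \<noteq> 0\<^sub>m n n\<close> show False ..
  qed
  then obtain i j where ij: "i < n" "j < n" "A $$ (i, j) \<noteq> 0" by blast
  have "c * A $$ (i, j) = d * A $$ (i, j)"
    using arg_cong[OF eq, of "\<lambda>B. B $$ (i, j)"] ij A by simp
  with ij(3) show ?thesis by simp
qed

lemma odd_exponent_by_halving:
  fixes P :: "nat \<Rightarrow> bool"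
  assumes "P d" and "0 < d" and halve: "\<And>m. P (2 * m) \<Longrightarrow> P m"
  shows "\<exists>j. P (2 * j + 1)"
  using assms(1,2)
proof (induction d rule: less_induct)
  case (less d)
  show ?case
  proof (cases "even d")
    case True
    then obtain m where "d = 2 * m" by blast
    with less.prems have "P m" "0 < m" "m < d" using halve by auto
    then show ?thesis using less.IH by blast
  next
    case False
    then obtain j where "d = 2 * j + 1" using oddE by blast
    with less.prems show ?thesis by blast
  qed
qed

lemma finite_carrier_mat: "finite (carrier_mat n m :: 'a::finite mat set)"
proof (rule finite_subset)
  let ?I = "{0..<n} \<times> {0..<m}"
  show "carrier_mat n m \<subseteq> mat n m ` Pi\<^sub>E ?I (\<lambda>_. UNIV :: 'a set)"
  proof
    fix A :: "'a mat" assume A: "A \<in> carrier_mat n m"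
    show "A \<in> mat n m ` Pi\<^sub>E ?I (\<lambda>_. UNIV)"
    proof (rule image_eqI[where x = "restrict (\<lambda>ij. A $$ ij) ?I"])
      show "A = mat n m (restrict (\<lambda>ij. A $$ ij) ?I)" by (rule eq_matI) (use A in auto)
    qed simp
  qed
qed (intro finite_imageI finite_PiE, auto)

text \<open>In characteristic 2 such a y is 1 + N with N * N = 0, and the condition on N M N says that N has
  rank at most one: these are the transvections together with the identity.\<close>
definition quasi_transvection :: "nat \<Rightarrow> 'a::field mat \<Rightarrow> bool" where
  "quasi_transvection n y \<longleftrightarrow> y \<in> carrier_mat n n \<and> y * y = 1\<^sub>m n \<and>
     (\<forall>M \<in> carrier_mat n n. \<exists>c. (y + 1\<^sub>m n) * (M * (y + 1\<^sub>m n)) = c \<cdot>\<^sub>m (y + 1\<^sub>m n))"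

lemma jordan_matrix_replicate_one: "jordan_matrix (replicate k (1, 1 :: 'a::field)) = 1\<^sub>m k"
proof (induction k)
  case (Suc k)
  have "sum_list (map fst (replicate k (1::nat, 1::'a))) = k" by (induction k) auto
  then show ?case unfolding replicate_Suc jordan_matrix_Cons Suc by (intro eq_matI) auto
qed (auto simp: jordan_matrix_def)

lemma jordan_matrix_transvection:
  assumes n: "n \<ge> 2"
  shows "jordan_matrix ((2, 1 :: 'a::field) # replicate (n - 2) (1, 1)) \<in> carrier_mat n n"
    and "i < n \<Longrightarrow> j < n \<Longrightarrow> jordan_matrix ((2, 1 :: 'a) # replicate (n - 2) (1, 1)) $$ (i, j)
      = (if i = j \<or> (i = 0 \<and> j = 1) then 1 else 0)"
proof -
  have sum: "sum_list (map fst (replicate k (1::nat, 1::'a))) = k" for k by (induction k) auto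
  show "jordan_matrix ((2, 1 :: 'a) # replicate (n - 2) (1, 1)) \<in> carrier_mat n n"
    using n unfolding carrier_mat_def by (simp add: sum_list_replicate)
  show "jordan_matrix ((2, 1 :: 'a) # replicate (n - 2) (1, 1)) $$ (i, j)
      = (if i = j \<or> (i = 0 \<and> j = 1) then 1 else 0)" if "i < n" "j < n"
    unfolding jordan_matrix_Cons sum jordan_matrix_replicate_one using n that by auto
qed

context
  fixes n :: nat
begin

lemma mat_laws:
  fixes A B C :: "'a::comm_ring_1 mat"
  assumes "A \<in> carrier_mat n n" "B \<in> carrier_mat n n" "C \<in> carrier_mat n n"
  shows "(A + B) * C = A * C + B * C" "C * (A + B) = C * A + C * B"
    "(A * B) * C = A * (B * C)" "(A + B) + C = A + (B + C)" "A + B = B + A" "A + (B + C) = B + (A + C)"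
    "1\<^sub>m n * A = A" "A * 1\<^sub>m n = A" "0\<^sub>m n n * A = 0\<^sub>m n n" "A * 0\<^sub>m n n = 0\<^sub>m n n"
    "0\<^sub>m n n + A = A" "A + 0\<^sub>m n n = A"
  using assms by (auto simp: add_mult_distrib_mat mult_add_distrib_mat comm_add_mat intro!: eq_matI)

lemma smult_mat_laws:
  fixes A B :: "'a::comm_ring_1 mat"
  assumes "A \<in> carrier_mat n n" "B \<in> carrier_mat n n"
  shows "(c \<cdot>\<^sub>m A) * B = c \<cdot>\<^sub>m (A * B)" "A * (c \<cdot>\<^sub>m B) = c \<cdot>\<^sub>m (A * B)"
    "c \<cdot>\<^sub>m (d \<cdot>\<^sub>m A) = (c * d) \<cdot>\<^sub>m A" "c \<cdot>\<^sub>m (A + B) = c \<cdot>\<^sub>m A + c \<cdot>\<^sub>m B"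
    "1 \<cdot>\<^sub>m A = A" "0 \<cdot>\<^sub>m A = 0\<^sub>m n n" "c \<cdot>\<^sub>m 0\<^sub>m n n = 0\<^sub>m n n"
  using assms by (auto simp: algebra_simps intro!: eq_matI)

lemma smult_mat_collect:
  fixes A B :: "'a::comm_ring_1 mat"
  assumes "A \<in> carrier_mat n n" "B \<in> carrier_mat n n"
  shows "c \<cdot>\<^sub>m A + d \<cdot>\<^sub>m A = (c + d) \<cdot>\<^sub>m A" "c \<cdot>\<^sub>m A + (d \<cdot>\<^sub>m A + B) = (c + d) \<cdot>\<^sub>m A + B"
  using assms by (auto simp: algebra_simps intro!: eq_matI)

lemma pow_mat_add:
  fixes t :: "'a::comm_ring_1 mat"
  assumes t: "t \<in> carrier_mat n n"
  shows "t ^\<^sub>m (a + b) = t ^\<^sub>m a * t ^\<^sub>m b"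
proof (induction b)
  case (Suc b)
  then show ?case using t by (simp add: mat_laws(3)[of "t ^\<^sub>m a" "t ^\<^sub>m b" t])
qed (use t in \<open>simp add: mat_laws\<close>)

lemma pow_mat_inverse:
  fixes t u :: "'a::comm_ring_1 mat"
  assumes t: "t \<in> carrier_mat n n" and u: "u \<in> carrier_mat n n" and ut: "u * t = 1\<^sub>m n"
  shows "u ^\<^sub>m k * t ^\<^sub>m k = 1\<^sub>m n"
proof (induction k)
  case (Suc k)
  have "t ^\<^sub>m Suc k = t * t ^\<^sub>m k" using pow_mat_add[OF t, of 1 k] t by (simp add: mat_laws)
  then have "u ^\<^sub>m Suc k * t ^\<^sub>m Suc k = u ^\<^sub>m k * ((u * t) * t ^\<^sub>m k)"
    using t u by (simp add: mat_laws)
  also have "\<dots> = 1\<^sub>m n" using Suc.IH t by (simp add: ut mat_laws)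
  finally show ?case by simp
qed (use u t in simp)

lemma invertible_mat_finite_order:
  fixes t u :: "'a::{comm_ring_1,finite} mat"
  assumes t: "t \<in> carrier_mat n n" and u: "u \<in> carrier_mat n n" and ut: "u * t = 1\<^sub>m n"
  shows "\<exists>d>0. t ^\<^sub>m d = 1\<^sub>m n"
proof -
  have "\<not> inj (\<lambda>k::nat. t ^\<^sub>m k)"
  proof
    assume "inj (\<lambda>k::nat. t ^\<^sub>m k)"
    moreover have "range (\<lambda>k. t ^\<^sub>m k) \<subseteq> carrier_mat n n" using t by auto
    ultimately show False
      using finite_carrier_mat[of n n] finite_subset finite_imageD infinite_UNIV_nat by metis
  qed
  then obtain a b where ab: "a < b" "t ^\<^sub>m a = t ^\<^sub>m b"
    by (metis injI linorder_neqE_nat)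
  have "t ^\<^sub>m a * t ^\<^sub>m (b - a) = t ^\<^sub>m b" using pow_mat_add[OF t, of a "b - a"] ab by simp
  then have "t ^\<^sub>m (b - a) = (u ^\<^sub>m a * t ^\<^sub>m a) * t ^\<^sub>m (b - a)"
    using pow_mat_inverse[OF t u ut] t by simp
  also have "\<dots> = u ^\<^sub>m a * t ^\<^sub>m b"
    using \<open>t ^\<^sub>m a * t ^\<^sub>m (b - a) = t ^\<^sub>m b\<close> t u by (simp add: mat_laws)
  also have "\<dots> = 1\<^sub>m n" using ab(2) pow_mat_inverse[OF t u ut, of a] by simp
  finally show ?thesis using ab by (intro exI[of _ "b - a"]) simp
qed

lemma smult_mat_eq_zero:
  fixes A :: "'a::field mat"
  assumes "A \<in> carrier_mat n n" and "c \<cdot>\<^sub>m A = 0\<^sub>m n n"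
  shows "c = 0 \<or> A = 0\<^sub>m n n"
  using smult_mat_cancel[of A n c 0] assms by (auto simp: smult_mat_laws)

lemma common_sandwich_scalar:
  fixes A B :: "'a::field mat"
  assumes A: "A \<in> carrier_mat n n" and B: "B \<in> carrier_mat n n"
    and c1: "A * (B * A) = c1 \<cdot>\<^sub>m A" and c2: "B * (A * B) = c2 \<cdot>\<^sub>m B"
  obtains l where "A * (B * A) = l \<cdot>\<^sub>m A" and "B * (A * B) = l \<cdot>\<^sub>m B"
proof (cases "A * B = 0\<^sub>m n n")
  case True
  have "A * (B * A) = (A * B) * A" using A B by (simp add: mat_laws)
  then have "A * (B * A) = 0 \<cdot>\<^sub>m A" and "B * (A * B) = 0 \<cdot>\<^sub>m B"
    using True A B by (simp_all add: smult_mat_laws mat_laws)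
  then show ?thesis using that by blast
next
  case False
  \<comment> \<open>Both scalars compute the same product A B A B.\<close>
  have "c1 \<cdot>\<^sub>m (A * B) = (A * (B * A)) * B" using c1 A B by (simp add: smult_mat_laws)
  also have "\<dots> = A * (B * (A * B))" using A B by (simp add: mat_laws)
  also have "\<dots> = c2 \<cdot>\<^sub>m (A * B)" using c2 A B by (simp add: smult_mat_laws)
  finally have "c1 = c2" using smult_mat_cancel[of "A * B" n c1 c2] False A B by simp
  then show ?thesis using that c1 c2 by blast
qed

lemma quasi_transvection_similar:
  fixes J P Q :: "'a::field mat"
  assumes J: "quasi_transvection n J" and P: "P \<in> carrier_mat n n" and Q: "Q \<in> carrier_mat n n"
    and PQ: "P * Q = 1\<^sub>m n" and QP: "Q * P = 1\<^sub>m n"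
  shows "quasi_transvection n (P * J * Q)"
proof -
  have J_carrier: "J \<in> carrier_mat n n" and JJ: "J * J = 1\<^sub>m n"
    using J unfolding quasi_transvection_def by auto
  define K where "K = J + 1\<^sub>m n"
  have K: "K \<in> carrier_mat n n" unfolding K_def using J_carrier by simp
  have conj_K: "P * J * Q + 1\<^sub>m n = P * (K * Q)"
    unfolding K_def using J_carrier P Q PQ by (simp add: mat_laws)
  have JJQ: "J * (J * Q) = Q"
  proof -
    have "J * (J * Q) = (J * J) * Q" using J_carrier Q by (simp add: mat_laws)
    then show ?thesis using JJ Q by simp
  qed
  have "(P * J * Q) * (P * J * Q) = P * (J * ((Q * P) * (J * Q)))"
    using P Q J_carrier by (simp add: mat_laws)
  also have "\<dots> = P * Q" unfolding QP using J_carrier Q by (simp add: JJQ)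
  also have "\<dots> = 1\<^sub>m n" by (rule PQ)
  finally have square: "(P * J * Q) * (P * J * Q) = 1\<^sub>m n" .
  have "\<exists>c. (P * (K * Q)) * (M * (P * (K * Q))) = c \<cdot>\<^sub>m (P * (K * Q))"
    if M: "M \<in> carrier_mat n n" for M
  proof -
    obtain c where c: "K * ((Q * (M * P)) * K) = c \<cdot>\<^sub>m K"
      using J Q M P unfolding quasi_transvection_def K_def by (meson mult_carrier_mat)
    have "(P * (K * Q)) * (M * (P * (K * Q))) = P * ((K * ((Q * (M * P)) * K)) * Q)"
      using P Q K M by (simp add: mat_laws)
    also have "\<dots> = c \<cdot>\<^sub>m (P * (K * Q))" unfolding c using P Q K by (simp add: smult_mat_laws mat_laws)
    finally show ?thesis by blast
  qed
  then show ?thesis unfolding quasi_transvection_def conj_K using square P Q J_carrier by simp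
qed

lemma quasi_transvection_SL_class:
  fixes x :: "'a::field mat"
  assumes x: "quasi_transvection n x" and y: "y \<in> SL_class n x"
  shows "quasi_transvection n y"
proof -
  obtain g where g: "g \<in> SL_mat n" and y_eq: "y = mconj n g x" using y unfolding SL_class_def by blast
  obtain h where h: "h \<in> carrier_mat n n" "g * h = 1\<^sub>m n" "h * g = 1\<^sub>m n"
    using SL_mat_invertible[OF g] by blast
  have g_carrier: "g \<in> carrier_mat n n" using g unfolding SL_mat_def by simp
  have "y = g * x * h" using y_eq minv_unique[OF g_carrier h] unfolding mconj_def by simp
  then show ?thesis using quasi_transvection_similar[OF x g_carrier h] by simp
qed

lemma decomposition_separates_odd_order:
  fixes r s :: "'a::field mat"
  assumes dec: "decomposition X (mconj n) R S" and rR: "r \<in> R" and sS: "s \<in> S"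
    and r: "r \<in> carrier_mat n n" and s: "s \<in> carrier_mat n n"
    and rr: "r * r = 1\<^sub>m n" and ss: "s * s = 1\<^sub>m n"
  shows "(r * s) ^\<^sub>m (2 * j + 1) \<noteq> 1\<^sub>m n"
proof
  assume odd_order: "(r * s) ^\<^sub>m (2 * j + 1) = 1\<^sub>m n"
  define t where "t = r * s"
  have t: "t \<in> carrier_mat n n" unfolding t_def using r s by simp
  have disjoint: "R \<inter> S = {}" and stable: "\<And>z. z \<in> R \<union> S \<Longrightarrow> mconj n z ` R = R"
    using dec unfolding decomposition_def by auto
  have t_commute: "t * t ^\<^sub>m k = t ^\<^sub>m k * t" for k
    using pow_mat_add[OF t, of 1 k] pow_mat_add[OF t, of k 1] t by (simp add: mat_laws)
  \<comment> \<open>Conjugating first by s and then by r multiplies by t^2 on the left.\<close>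
  have orbit: "t ^\<^sub>m (2 * k) * r \<in> R" for k
  proof (induction k)
    case (Suc k)
    define T where "T = t ^\<^sub>m (2 * k)"
    have T: "T \<in> carrier_mat n n" unfolding T_def using t by simp
    have "mconj n r (mconj n s (T * r)) \<in> R"
      using stable rR sS Suc unfolding T_def by blast
    moreover have "mconj n r (mconj n s (T * r)) = T * (r * s) * (r * s) * r"
    proof -
      have "mconj n r (mconj n s (T * r)) = (r * s) * T * (r * s) * r"
        using r s T by (simp add: mconj_involution[OF r rr] mconj_involution[OF s ss] mat_laws)
      also have "\<dots> = T * (r * s) * (r * s) * r"
        using t_commute[of "2 * k"] r s T unfolding T_def t_def by (simp add: mat_laws)
      finally show ?thesis .
    qed
    moreover have "T * (r * s) * (r * s) = t ^\<^sub>m (2 * Suc k)" unfolding T_def t_def by simp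
    ultimately show ?case by simp
  qed (use r t rR in simp)
  have "t ^\<^sub>m (2 * j) * r = (t ^\<^sub>m (2 * j) * t) * s" unfolding t_def using r s ss t by (simp add: mat_laws)
  also have "\<dots> = s" using odd_order s unfolding t_def by simp
  finally have "s \<in> R" using orbit[of j] by simp
  with sS disjoint show False by blast
qed

context
  assumes char_two: "(1::'a::field) + 1 = 0"
begin

lemma add_self_eq_zero: "(x::'a) + x = 0"
  using distrib_left[of x 1 1] char_two by simp

lemma uminus_eq_self: "- (x::'a) = x"
  using add_self_eq_zero[of x] by (simp add: eq_neg_iff_add_eq_0)

lemma mat_add_self:
  fixes A B :: "'a mat"
  assumes "A \<in> carrier_mat n n" "B \<in> carrier_mat n n"
  shows "A + A = 0\<^sub>m n n" "A + (A + B) = B"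
  using assms by (auto simp: add.assoc[symmetric] add_self_eq_zero intro!: eq_matI)

lemma square_plus_one:
  fixes A :: "'a mat"
  assumes A: "A \<in> carrier_mat n n"
  shows "(A + 1\<^sub>m n) * (A + 1\<^sub>m n) = A * A + 1\<^sub>m n"
proof -
  have "(A + 1\<^sub>m n) * (A + 1\<^sub>m n) = A * A + (A + (A + 1\<^sub>m n))"
    using A by (simp add: mat_laws)
  also have "\<dots> = A * A + 1\<^sub>m n" using A by (simp add: mat_add_self)
  finally show ?thesis .
qed

text \<open>E and y span a copy of F[X]/(X^2 + l X + 1), which is reduced in characteristic 2 when l \<noteq> 0.\<close>
lemma span_square_zero_eq_zero:
  fixes E y :: "'a mat"
  assumes E: "E \<in> carrier_mat n n" and y: "y \<in> carrier_mat n n"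
    and EE: "E * E = E" and Ey: "E * y = y" and yE: "y * E = y"
    and yy: "y * y = E + l \<cdot>\<^sub>m y" and l: "l \<noteq> 0"
    and NN: "(a \<cdot>\<^sub>m E + b \<cdot>\<^sub>m y) * (a \<cdot>\<^sub>m E + b \<cdot>\<^sub>m y) = 0\<^sub>m n n"
  shows "a \<cdot>\<^sub>m E + b \<cdot>\<^sub>m y = 0\<^sub>m n n"
proof -
  have square_E_zero: "c \<cdot>\<^sub>m E = 0\<^sub>m n n" if "(c * c) \<cdot>\<^sub>m E = 0\<^sub>m n n" for c
    using smult_mat_eq_zero[OF E that] E by (auto simp: smult_mat_laws)
  have "(a \<cdot>\<^sub>m E + b \<cdot>\<^sub>m y) * (a \<cdot>\<^sub>m E + b \<cdot>\<^sub>m y)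
      = (a * a) \<cdot>\<^sub>m (E * E) + (b * a) \<cdot>\<^sub>m (E * y) + (a * b) \<cdot>\<^sub>m (y * E) + (b * b) \<cdot>\<^sub>m (y * y)"
    using E y by (simp add: mat_laws smult_mat_laws)
  also have "\<dots> = (a * a) \<cdot>\<^sub>m E + ((a * b) \<cdot>\<^sub>m y + (a * b) \<cdot>\<^sub>m y) + (b * b) \<cdot>\<^sub>m (E + l \<cdot>\<^sub>m y)"
    using E y by (simp add: EE Ey yE yy mat_laws mult.commute)
  also have "\<dots> = (a * a + b * b) \<cdot>\<^sub>m E + (b * b * l) \<cdot>\<^sub>m y"
    using E y by (simp add: mat_laws mat_add_self smult_mat_laws smult_mat_collect mult.assoc)
  finally have expanded: "(a * a + b * b) \<cdot>\<^sub>m E + (b * b * l) \<cdot>\<^sub>m y = 0\<^sub>m n n" using NN by simp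
  show ?thesis
  proof (cases "b = 0")
    case True
    then have "(a * a) \<cdot>\<^sub>m E = 0\<^sub>m n n" using expanded E y by (simp add: smult_mat_laws mat_laws)
    from square_E_zero[OF this] show ?thesis using True E y by (simp add: smult_mat_laws mat_laws)
  next
    case False
    define u where "u = a * a + b * b"
    define v where "v = b * b * l"
    have v: "v \<noteq> 0" using False l unfolding v_def by simp
    have y_multiple: "y = (u / v) \<cdot>\<^sub>m E"
    proof (rule eq_matI)
      fix i j assume "i < dim_row ((u / v) \<cdot>\<^sub>m E)" "j < dim_col ((u / v) \<cdot>\<^sub>m E)"
      then have ij: "i < n" "j < n" using E by auto
      have "u * E $$ (i, j) + v * y $$ (i, j) = 0"
        using arg_cong[OF expanded, of "\<lambda>X. X $$ (i, j)"] ij E y unfolding u_def v_def by simp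
      then have "v * y $$ (i, j) = - (u * E $$ (i, j))" by (simp add: eq_neg_iff_add_eq_0 add.commute)
      then have "v * y $$ (i, j) = u * E $$ (i, j)" by (simp add: uminus_eq_self)
      then show "y $$ (i, j) = ((u / v) \<cdot>\<^sub>m E) $$ (i, j)" using ij E v by (simp add: field_simps)
    qed (use E y in auto)
    define c where "c = a + b * (u / v)"
    have N: "a \<cdot>\<^sub>m E + b \<cdot>\<^sub>m y = c \<cdot>\<^sub>m E"
      unfolding c_def y_multiple using E by (simp add: smult_mat_laws smult_mat_collect)
    have "(c * c) \<cdot>\<^sub>m E = 0\<^sub>m n n" using NN E unfolding N by (simp add: smult_mat_laws EE)
    from square_E_zero[OF this] show ?thesis using N by simp
  qed
qed

lemma semisimple_order_odd:
  fixes E y t :: "'a mat"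
  assumes E: "E \<in> carrier_mat n n" and y: "y \<in> carrier_mat n n"
    and EE: "E * E = E" and Ey: "E * y = y" and yE: "y * E = y"
    and yy: "y * y = E + l \<cdot>\<^sub>m y" and l: "l \<noteq> 0"
    and t: "t = (1\<^sub>m n + E) + y" and order: "t ^\<^sub>m d = 1\<^sub>m n" "0 < d"
  shows "\<exists>j. t ^\<^sub>m (2 * j + 1) = 1\<^sub>m n"
proof -
  define F where "F = 1\<^sub>m n + E"
  have F: "F \<in> carrier_mat n n" and t_carrier: "t \<in> carrier_mat n n"
    unfolding F_def t using E y by auto
  have FF: "F * F = F" and Fy: "F * y = 0\<^sub>m n n" and yF: "y * F = 0\<^sub>m n n" and EF: "E * F = 0\<^sub>m n n"
    unfolding F_def using E y by (simp_all add: mat_laws mat_add_self EE Ey yE)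
  have powers: "\<exists>a b. t ^\<^sub>m k = F + (a \<cdot>\<^sub>m E + b \<cdot>\<^sub>m y)" for k
  proof (induction k)
    case 0
    have "t ^\<^sub>m 0 = F + (1 \<cdot>\<^sub>m E + 0 \<cdot>\<^sub>m y)"
      using t_carrier E y unfolding F_def by (simp add: smult_mat_laws mat_laws mat_add_self)
    then show ?case by blast
  next
    case (Suc k)
    then obtain a b where ab: "t ^\<^sub>m k = F + (a \<cdot>\<^sub>m E + b \<cdot>\<^sub>m y)" by blast
    have "t ^\<^sub>m Suc k = (F + (a \<cdot>\<^sub>m E + b \<cdot>\<^sub>m y)) * (F + y)"
      using ab t F_def by (simp add: mat_laws E)
    also have "\<dots> = F * F + F * y + (a \<cdot>\<^sub>m (E * F) + b \<cdot>\<^sub>m (y * F))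
        + (a \<cdot>\<^sub>m (E * y) + b \<cdot>\<^sub>m (y * y))"
      using E y F by (simp add: mat_laws smult_mat_laws)
    also have "\<dots> = F + (a \<cdot>\<^sub>m y + b \<cdot>\<^sub>m (E + l \<cdot>\<^sub>m y))"
      using E y F by (simp add: FF Fy yF EF Ey yy mat_laws smult_mat_laws)
    also have "\<dots> = F + (b \<cdot>\<^sub>m E + (a + b * l) \<cdot>\<^sub>m y)"
      by (rule eq_matI) (use E y F in \<open>auto simp: algebra_simps\<close>)
    finally show ?case by blast
  qed
  \<comment> \<open>In characteristic 2, t^m + 1 squares to t^(2m) + 1 and lies in the span of E and y.\<close>
  have halve: "t ^\<^sub>m m = 1\<^sub>m n" if square: "t ^\<^sub>m (2 * m) = 1\<^sub>m n" for m
  proof -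
    obtain a b where ab: "t ^\<^sub>m m = F + (a \<cdot>\<^sub>m E + b \<cdot>\<^sub>m y)" using powers by blast
    have a1: "(a + 1) \<cdot>\<^sub>m E = a \<cdot>\<^sub>m E + E"
      using smult_mat_collect(1)[OF E E, of a 1] smult_mat_laws(5)[OF E E] by simp
    have N: "(a + 1) \<cdot>\<^sub>m E + b \<cdot>\<^sub>m y = t ^\<^sub>m m + 1\<^sub>m n"
      unfolding a1 ab F_def using E y by (simp add: mat_laws mat_add_self)
    have "(t ^\<^sub>m m + 1\<^sub>m n) * (t ^\<^sub>m m + 1\<^sub>m n) = t ^\<^sub>m m * t ^\<^sub>m m + 1\<^sub>m n"
      using t_carrier by (simp add: square_plus_one)
    also have "\<dots> = 0\<^sub>m n n"
      using square pow_mat_add[OF t_carrier, of m m] mat_add_self(1)[OF one_carrier_mat one_carrier_mat]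
      by (simp add: mult_2)
    finally have "t ^\<^sub>m m + 1\<^sub>m n = 0\<^sub>m n n"
      using span_square_zero_eq_zero[OF E y EE Ey yE yy l] unfolding N[symmetric] by blast
    then have "t ^\<^sub>m m + (t ^\<^sub>m m + 1\<^sub>m n) = t ^\<^sub>m m" using t_carrier by (simp add: mat_laws)
    then show ?thesis using t_carrier by (simp add: mat_add_self)
  qed
  show ?thesis using odd_exponent_by_halving[of "\<lambda>k. t ^\<^sub>m k = 1\<^sub>m n", OF order] halve by blast
qed

lemma involution_plus_one_square:
  fixes r :: "'a mat"
  assumes r: "r \<in> carrier_mat n n" and rr: "r * r = 1\<^sub>m n"
  shows "(r + 1\<^sub>m n) * (r + 1\<^sub>m n) = 0\<^sub>m n n"
  using square_plus_one[OF r] rr mat_add_self(1)[OF one_carrier_mat one_carrier_mat] by simp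

lemma involution_product_expand:
  fixes r s :: "'a mat"
  assumes r: "r \<in> carrier_mat n n" and s: "s \<in> carrier_mat n n"
  shows "r * s = ((r + 1\<^sub>m n) + ((s + 1\<^sub>m n) + (r + 1\<^sub>m n) * (s + 1\<^sub>m n))) + 1\<^sub>m n"
  using r s by (simp add: mat_laws mat_add_self)

lemma square_zero_pair_identities:
  fixes A B :: "'a mat"
  assumes A: "A \<in> carrier_mat n n" and B: "B \<in> carrier_mat n n"
    and AA: "A * A = 0\<^sub>m n n" and BB: "B * B = 0\<^sub>m n n"
    and ABA: "A * (B * A) = l \<cdot>\<^sub>m A" and BAB: "B * (A * B) = l \<cdot>\<^sub>m B"
  defines "S \<equiv> A * B + B * A" and "M \<equiv> A + (B + A * B)"
  shows "S * S = l \<cdot>\<^sub>m S" and "S * M = l \<cdot>\<^sub>m M" and "M * S = l \<cdot>\<^sub>m M"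
    and "M * M = S + l \<cdot>\<^sub>m M"
proof -
  have AAX: "A * (A * X) = 0\<^sub>m n n" if X: "X \<in> carrier_mat n n" for X
  proof -
    have "A * (A * X) = (A * A) * X" using A X by (simp add: mat_laws)
    also have "\<dots> = 0\<^sub>m n n" using X by (simp add: AA mat_laws)
    finally show ?thesis .
  qed
  have BBX: "B * (B * X) = 0\<^sub>m n n" if X: "X \<in> carrier_mat n n" for X
  proof -
    have "B * (B * X) = (B * B) * X" using B X by (simp add: mat_laws)
    also have "\<dots> = 0\<^sub>m n n" using X by (simp add: BB mat_laws)
    finally show ?thesis .
  qed
  have ABAX: "A * (B * (A * X)) = l \<cdot>\<^sub>m (A * X)" if X: "X \<in> carrier_mat n n" for X
  proof -
    have "A * (B * (A * X)) = (A * (B * A)) * X" using A B X by (simp add: mat_laws)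
    also have "\<dots> = l \<cdot>\<^sub>m (A * X)" using A X by (simp add: ABA smult_mat_laws)
    finally show ?thesis .
  qed
  have BABX: "B * (A * (B * X)) = l \<cdot>\<^sub>m (B * X)" if X: "X \<in> carrier_mat n n" for X
  proof -
    have "B * (A * (B * X)) = (B * (A * B)) * X" using A B X by (simp add: mat_laws)
    also have "\<dots> = l \<cdot>\<^sub>m (B * X)" using B X by (simp add: BAB smult_mat_laws)
    finally show ?thesis .
  qed
  note rules = AA BB ABA BAB AAX BBX ABAX BABX
  show "S * S = l \<cdot>\<^sub>m S" unfolding S_def using A B by (simp add: mat_laws mat_add_self smult_mat_laws rules)
  show "S * M = l \<cdot>\<^sub>m M" unfolding S_def M_def using A B by (simp add: mat_laws mat_add_self smult_mat_laws rules)
  show "M * S = l \<cdot>\<^sub>m M" unfolding S_def M_def using A B by (simp add: mat_laws mat_add_self smult_mat_laws rules)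
  show "M * M = S + l \<cdot>\<^sub>m M" unfolding S_def M_def using A B by (simp add: mat_laws mat_add_self smult_mat_laws rules)
qed

lemma involution_pair_relation_if_sandwich_zero:
  fixes r s :: "'a mat"
  assumes r: "r \<in> carrier_mat n n" and s: "s \<in> carrier_mat n n"
    and rr: "r * r = 1\<^sub>m n" and ss: "s * s = 1\<^sub>m n"
    and ABA: "(r + 1\<^sub>m n) * ((s + 1\<^sub>m n) * (r + 1\<^sub>m n)) = 0\<^sub>m n n"
    and BAB: "(s + 1\<^sub>m n) * ((r + 1\<^sub>m n) * (s + 1\<^sub>m n)) = 0\<^sub>m n n"
  shows "r * (s * (r * s * r) * s) * r = s"
proof -
  define A B where "A = r + 1\<^sub>m n" and "B = s + 1\<^sub>m n"
  define S M where "S = A * B + B * A" and "M = A + (B + A * B)"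
  have A: "A \<in> carrier_mat n n" and B: "B \<in> carrier_mat n n" and S: "S \<in> carrier_mat n n"
    and M: "M \<in> carrier_mat n n" unfolding A_def B_def S_def M_def using r s by auto
  have "A * (B * A) = 0 \<cdot>\<^sub>m A" and "B * (A * B) = 0 \<cdot>\<^sub>m B"
    using ABA BAB smult_mat_laws(6)[OF A A] smult_mat_laws(6)[OF B B] by (simp_all add: A_def B_def)
  note identities = square_zero_pair_identities[OF A B _ _ this, folded S_def M_def,
      OF involution_plus_one_square[OF r rr, folded A_def] involution_plus_one_square[OF s ss, folded B_def]]
  have SS: "S * S = 0\<^sub>m n n" using identities(1) S by (simp add: smult_mat_laws)
  have MM: "M * M = S" using identities(4) S M by (simp add: smult_mat_laws mat_laws)
  define t where "t = r * s"
  have t: "t \<in> carrier_mat n n" unfolding t_def using r s by simp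
  have "t = M + 1\<^sub>m n"
    unfolding t_def M_def A_def B_def by (rule involution_product_expand[OF r s])
  then have tt: "t * t = S + 1\<^sub>m n" using square_plus_one[OF M] MM by simp
  have "t * (t * (t * t)) = (t * t) * (t * t)" using t by (simp add: mat_laws)
  also have "\<dots> = 1\<^sub>m n" unfolding tt using square_plus_one[OF S] SS S by (simp add: mat_laws)
  finally have t4: "t * (t * (t * t)) = 1\<^sub>m n" .
  have ts: "t * s = r" unfolding t_def using r s ss by (simp add: mat_laws)
  have "s = (t * (t * (t * t))) * s" using t4 s by (simp add: mat_laws)
  also have "\<dots> = t * (t * (t * (t * s)))" using t s by (simp add: mat_laws)
  also have "\<dots> = t * (t * (t * r))" unfolding ts ..
  also have "\<dots> = r * (s * (r * s * r) * s) * r" unfolding t_def using r s by (simp add: mat_laws)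
  finally show ?thesis by simp
qed

lemma involution_pair_odd_order_if_sandwich_nonzero:
  fixes r s :: "'a mat"
  assumes r: "r \<in> carrier_mat n n" and s: "s \<in> carrier_mat n n"
    and rr: "r * r = 1\<^sub>m n" and ss: "s * s = 1\<^sub>m n"
    and ABA: "(r + 1\<^sub>m n) * ((s + 1\<^sub>m n) * (r + 1\<^sub>m n)) = l \<cdot>\<^sub>m (r + 1\<^sub>m n)"
    and BAB: "(s + 1\<^sub>m n) * ((r + 1\<^sub>m n) * (s + 1\<^sub>m n)) = l \<cdot>\<^sub>m (s + 1\<^sub>m n)"
    and l: "l \<noteq> 0" and order: "(r * s) ^\<^sub>m d = 1\<^sub>m n" "0 < d"
  shows "\<exists>j. (r * s) ^\<^sub>m (2 * j + 1) = 1\<^sub>m n"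
proof -
  define A B where "A = r + 1\<^sub>m n" and "B = s + 1\<^sub>m n"
  define S M where "S = A * B + B * A" and "M = A + (B + A * B)"
  have A: "A \<in> carrier_mat n n" and B: "B \<in> carrier_mat n n" and S: "S \<in> carrier_mat n n"
    and M: "M \<in> carrier_mat n n" unfolding A_def B_def S_def M_def using r s by auto
  note identities = square_zero_pair_identities[OF A B _ _ ABA[folded A_def B_def] BAB[folded A_def B_def],
      folded S_def M_def,
      OF involution_plus_one_square[OF r rr, folded A_def] involution_plus_one_square[OF s ss, folded B_def]]
  \<comment> \<open>E is the idempotent projecting onto the plane spanned by the images of r + 1 and s + 1.\<close>
  define E where "E = inverse l \<cdot>\<^sub>m S"
  define y where "y = E + M"
  have inv: "l * inverse l = 1" "inverse l * l = 1" using l by auto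
  have E: "E \<in> carrier_mat n n" and y: "y \<in> carrier_mat n n" unfolding E_def y_def using S M by auto
  have lE: "l \<cdot>\<^sub>m E = S" unfolding E_def using S inv by (simp add: smult_mat_laws)
  have EE: "E * E = E"
    unfolding E_def using S inv identities(1) by (simp add: smult_mat_laws mult.assoc[symmetric])
  have EM: "E * M = M" and ME: "M * E = M"
    unfolding E_def using S M inv identities(2,3) by (simp_all add: smult_mat_laws mult.assoc[symmetric])
  have Ey: "E * y = y" and yE: "y * E = y" unfolding y_def using E M by (simp_all add: mat_laws EE EM ME)
  have "y * y = E + (S + l \<cdot>\<^sub>m M)" unfolding y_def using E M S identities(4)
    by (simp add: mat_laws mat_add_self EE EM ME)
  also have "\<dots> = E + l \<cdot>\<^sub>m y" unfolding y_def using E M S by (simp add: smult_mat_laws lE)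
  finally have yy: "y * y = E + l \<cdot>\<^sub>m y" .
  have "r * s = M + 1\<^sub>m n"
    unfolding M_def A_def B_def by (rule involution_product_expand[OF r s])
  then have rs: "r * s = (1\<^sub>m n + E) + y" unfolding y_def using E M by (simp add: mat_laws mat_add_self)
  show ?thesis by (rule semisimple_order_odd[OF E y EE Ey yE yy l rs order])
qed

lemma quasi_transvection_jordan_matrix:
  assumes n: "n \<ge> 2"
  shows "quasi_transvection n (jordan_matrix ((2, 1 :: 'a) # replicate (n - 2) (1, 1)))"
proof -
  define J where "J = jordan_matrix ((2, 1 :: 'a) # replicate (n - 2) (1, 1))"
  have J: "J \<in> carrier_mat n n" unfolding J_def using jordan_matrix_transvection(1)[OF n] .
  define K where "K = J + 1\<^sub>m n"
  have K: "K \<in> carrier_mat n n" unfolding K_def using J by simp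
  have K_index: "K $$ (i, j) = (if i = 0 \<and> j = 1 then 1 else 0)" if "i < n" "j < n" for i j
    unfolding K_def J_def using that jordan_matrix_transvection(2)[OF n that] char_two by auto
  have J_eq: "J = K + 1\<^sub>m n" unfolding K_def using J by (simp add: mat_laws mat_add_self)
  have KK: "K * K = 0\<^sub>m n n"
  proof (rule eq_matI)
    fix i j assume "i < dim_row (0\<^sub>m n n :: 'a mat)" "j < dim_col (0\<^sub>m n n :: 'a mat)"
    then have ij: "i < n" "j < n" by auto
    have "(K * K) $$ (i, j) = (\<Sum>k\<in>{0..<n}. K $$ (i, k) * K $$ (k, j))"
      using ij K by (simp add: scalar_prod_def)
    also have "\<dots> = 0" using ij by (intro sum.neutral) (auto simp: K_index)
    finally show "(K * K) $$ (i, j) = (0\<^sub>m n n :: 'a mat) $$ (i, j)" using ij by simp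
  qed (use K in auto)
  have JJ: "J * J = 1\<^sub>m n" unfolding J_eq using square_plus_one[OF K] KK K by (simp add: mat_laws)
  have KMK: "K * (M * K) = (M $$ (1, 0)) \<cdot>\<^sub>m K" if M: "M \<in> carrier_mat n n" for M
  proof (rule eq_matI)
    fix i j assume "i < dim_row (M $$ (1, 0) \<cdot>\<^sub>m K)" "j < dim_col (M $$ (1, 0) \<cdot>\<^sub>m K)"
    then have ij: "i < n" "j < n" using K by auto
    have MK: "(M * K) $$ (k, j) = (if j = 1 then M $$ (k, 0) else 0)" if k: "k < n" for k
    proof -
      have "(M * K) $$ (k, j) = (\<Sum>l\<in>{0..<n}. M $$ (k, l) * K $$ (l, j))"
        using ij k K M by (simp add: scalar_prod_def)
      also have "\<dots> = (\<Sum>l\<in>{0..<n}. if l = 0 then (if j = 1 then M $$ (k, l) else 0) else 0)"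
        using ij by (intro sum.cong) (auto simp: K_index)
      also have "\<dots> = (if j = 1 then M $$ (k, 0) else 0)" using n by (simp add: sum.delta)
      finally show ?thesis .
    qed
    have "(K * (M * K)) $$ (i, j) = (\<Sum>k\<in>{0..<n}. K $$ (i, k) * (M * K) $$ (k, j))"
      using ij K M by (simp add: scalar_prod_def)
    also have "\<dots> = (\<Sum>k\<in>{0..<n}. if k = 1 then (if i = 0 then (M * K) $$ (k, j) else 0) else 0)"
      using ij by (intro sum.cong) (auto simp: K_index)
    also have "\<dots> = (if i = 0 then (M * K) $$ (1, j) else 0)" using n by (simp add: sum.delta)
    also have "\<dots> = (M $$ (1, 0) \<cdot>\<^sub>m K) $$ (i, j)" using ij n K by (auto simp: MK K_index)
    finally show "(K * (M * K)) $$ (i, j) = (M $$ (1, 0) \<cdot>\<^sub>m K) $$ (i, j)" .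
  qed (use K M in auto)
  show ?thesis
    unfolding quasi_transvection_def J_def[symmetric] K_def[symmetric] using J JJ KMK by blast
qed

lemma quasi_transvection_jordan_nf:
  fixes x :: "'a mat"
  assumes n: "n \<ge> 2" and x: "x \<in> carrier_mat n n"
    and jnf: "jordan_nf x ((2, 1) # replicate (n - 2) (1, 1))"
  shows "quasi_transvection n x"
proof -
  obtain m P Q where PQ: "{x, jordan_matrix ((2, 1) # replicate (n - 2) (1, 1)), P, Q} \<subseteq> carrier_mat m m"
    "P * Q = 1\<^sub>m m" "Q * P = 1\<^sub>m m" "x = P * jordan_matrix ((2, 1) # replicate (n - 2) (1, 1)) * Q"
    using jnf unfolding jordan_nf_def by (blast dest: similar_matD)
  have "m = n" using PQ(1) x by auto
  then have "quasi_transvection n (P * jordan_matrix ((2, 1) # replicate (n - 2) (1, 1)) * Q)"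
    using PQ by (intro quasi_transvection_similar[OF quasi_transvection_jordan_matrix[OF n]]) auto
  with PQ(4) show ?thesis by simp
qed

end

end

lemma quasi_transvection_pair_cases:
  fixes r s :: "'a::{field,finite} mat"
  assumes char_two: "(1::'a) + 1 = 0"
    and r: "quasi_transvection n r" and s: "quasi_transvection n s"
  shows "r * (s * (r * s * r) * s) * r = s \<or> (\<exists>j. (r * s) ^\<^sub>m (2 * j + 1) = 1\<^sub>m n)"
proof -
  have r_carrier: "r \<in> carrier_mat n n" and rr: "r * r = 1\<^sub>m n"
    and s_carrier: "s \<in> carrier_mat n n" and ss: "s * s = 1\<^sub>m n"
    using r s unfolding quasi_transvection_def by auto
  have A: "r + 1\<^sub>m n \<in> carrier_mat n n" and B: "s + 1\<^sub>m n \<in> carrier_mat n n"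
    using r_carrier s_carrier by auto
  obtain c1 c2 where "(r + 1\<^sub>m n) * ((s + 1\<^sub>m n) * (r + 1\<^sub>m n)) = c1 \<cdot>\<^sub>m (r + 1\<^sub>m n)"
    and "(s + 1\<^sub>m n) * ((r + 1\<^sub>m n) * (s + 1\<^sub>m n)) = c2 \<cdot>\<^sub>m (s + 1\<^sub>m n)"
    using r s A B unfolding quasi_transvection_def by meson
  then obtain l where ABA: "(r + 1\<^sub>m n) * ((s + 1\<^sub>m n) * (r + 1\<^sub>m n)) = l \<cdot>\<^sub>m (r + 1\<^sub>m n)"
    and BAB: "(s + 1\<^sub>m n) * ((r + 1\<^sub>m n) * (s + 1\<^sub>m n)) = l \<cdot>\<^sub>m (s + 1\<^sub>m n)"
    using common_sandwich_scalar[OF A B] by metis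
  show ?thesis
  proof (cases "l = 0")
    case True
    then have "r * (s * (r * s * r) * s) * r = s"
      using involution_pair_relation_if_sandwich_zero[OF char_two r_carrier s_carrier rr ss] ABA BAB A B
      by (simp add: smult_mat_laws)
    then show ?thesis ..
  next
    case False
    have "(s * r) * (r * s) = s * ((r * r) * s)" using r_carrier s_carrier by (simp add: mat_laws)
    then have "(s * r) * (r * s) = 1\<^sub>m n" using rr ss s_carrier by simp
    then obtain d where "0 < d" "(r * s) ^\<^sub>m d = 1\<^sub>m n"
      using invertible_mat_finite_order[of "r * s" n "s * r"] r_carrier s_carrier by auto
    then show ?thesis
      using involution_pair_odd_order_if_sandwich_nonzero[OF char_two r_carrier s_carrier rr ss ABA BAB False]
      by blast
  qed
qed

theorem mainTheorem14:
  fixes x :: "'a :: {field, finite} mat" and n :: nat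
  assumes "even (card (UNIV :: 'a set))"
    and "n \<ge> 2"
    and "x \<in> SL_mat n"
    and "jordan_nf x ((2, 1) # replicate (n - 2) (1, 1))"
  shows "\<not> type_D (SL_class n x) (mconj n)"
proof
  assume "type_D (SL_class n x) (mconj n)"
  then obtain R S r s where dec: "decomposition (SL_class n x) (mconj n) R S"
    and rR: "r \<in> R" and sS: "s \<in> S" and not_s: "mconj n r (mconj n s (mconj n r s)) \<noteq> s"
    unfolding type_D_def by blast
  have char_two: "(1::'a) + 1 = 0" using one_plus_one_eq_zero_if_even_card assms(1) .
  have "quasi_transvection n x"
    using quasi_transvection_jordan_nf[OF char_two assms(2) _ assms(4)] assms(3)
    unfolding SL_mat_def by simp
  moreover have "r \<in> SL_class n x" "s \<in> SL_class n x"
    using dec rR sS unfolding decomposition_def is_subrack_def by auto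
  ultimately have r: "quasi_transvection n r" and s: "quasi_transvection n s"
    using quasi_transvection_SL_class by blast+
  then have r_carrier: "r \<in> carrier_mat n n" and rr: "r * r = 1\<^sub>m n"
    and s_carrier: "s \<in> carrier_mat n n" and ss: "s * s = 1\<^sub>m n"
    unfolding quasi_transvection_def by auto
  show False
    using quasi_transvection_pair_cases[OF char_two r s] not_s
      decomposition_separates_odd_order[OF dec rR sS r_carrier s_carrier rr ss]
    by (auto simp: mconj_involution[OF r_carrier rr] mconj_involution[OF s_carrier ss])
qed

end
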